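(* Let $\mathcal{J}$ be an adapted almost tangent structure on $T^*M$, $\rho$ a $\mathcal{J}$-regular vector field, and let $\mathcal{N}$ be the canonical nonlinear connection induced by $\rho$ (so $h-v=-\mathcal{L}_\rho\mathcal{J}$). Let $\nabla$ be the dynamical covariant derivative induced by $\rho$ and $\mathbb{F}=h\circ\mathcal{L}_\rho h-\mathcal{J}$. Then $\nabla\mathcal{J}=0$ and $\nabla\mathbb{F}=0$.
   Context: $M$ is a smooth $n$-manifold and $T^*M$ its cotangent bundle, $VT^*M$ the vertical distribution (spanned locally by $\frac{\partial}{\partial p_i}$ in coordinates $(x^i,p_i)$). A nonlinear connection is a distribution supplementary to $VT^*M$, with horizontal and vertical projectors $h,v$. An adapted almost tangent structure is a $(1,1)$-tensor $\mathcal{J}$ of rank $n$ with $\mathcal{J}^2=0$, $\operatorname{Im}\mathcal{J}=\operatorname{Ker}\mathcal{J}=VT^*M$. A vector field $\rho$ is $\mathcal{J}$-regular if $\mathcal{J}[\rho,\mathcal{J}X]=-\mathcal{J}X$ for all vector fields $X$. $\mathcal{L}_\rho$ denotes $X\mapsto[\rho,X]$ on vector fields, and for a $(1,1)$-tensor $L$, $\mathcal{L}_\rho L=\mathcal{L}_\rho\circ L-L\circ\mathcal{L}_\rho$. The dynamical covariant derivative induced by $\rho$ is the unique tensor derivation $\nabla$ on $T^*M\setminus\{0\}$ ($\mathbb{R}$-linear, type preserving, Leibniz rule for tensor products, commuting with contractions) with $\nabla f=\rho(f)$ on functions and $\nabla X=h[\rho,hX]+v[\rho,vX]$ on vector fields;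 on a $(1,1)$-tensor $T$ it acts by $\nabla T=\nabla\circ T-T\circ\nabla$. *)

theory Defs
  imports "HOL-Analysis.Analysis"
begin

text \<open>Local coordinate model of the cotangent bundle: a chart domain of T*M is an
open set S of pairs (x,p) in R^n x R^n.  Tangent vectors at a point are again pairs
(dx,dp); vector fields are maps S -> R^n x R^n; the vertical distribution is spanned
by the d/dp_i, i.e. consists of the vectors with vanishing x-component.\<close>

type_synonym ('n) cot = "(real^'n::finite) \<times> (real^'n)"
type_synonym 'n vf = "'n cot \<Rightarrow> 'n cot"
type_synonym 'n tens11 = "'n cot \<Rightarrow> 'n cot \<Rightarrow> 'n cot"

definition vertical :: "('n::finite) cot set" where
  "vertical = {u. fst u = 0}"

fun iter_deriv :: "('a::real_normed_vector \<Rightarrow> 'b::real_normed_vector) \<Rightarrow> 'a list \<Rightarrow> 'a \<Rightarrow> 'b" where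
  "iter_deriv f [] = f"
| "iter_deriv f (w # ws) = (\<lambda>z. frechet_derivative (iter_deriv f ws) (at z) w)"

definition smooth_on :: "'a::real_normed_vector set \<Rightarrow> ('a \<Rightarrow> 'b::real_normed_vector) \<Rightarrow> bool" where
  "smooth_on S f \<longleftrightarrow> (\<forall>ws. \<forall>z\<in>S. iter_deriv f ws differentiable (at z))"

definition smooth_tensor11 :: "('n::finite) cot set \<Rightarrow> 'n tens11 \<Rightarrow> bool" where
  "smooth_tensor11 S T \<longleftrightarrow> (\<forall>z\<in>S. linear (T z)) \<and> (\<forall>u. smooth_on S (\<lambda>z. T z u))"

definition app11 :: "('n::finite) tens11 \<Rightarrow> 'n vf \<Rightarrow> 'n vf" where
  "app11 T X = (\<lambda>z. T z (X z))"

definition lie :: "('n::finite) vf \<Rightarrow> 'n vf \<Rightarrow> 'n vf" where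
  "lie X Y = (\<lambda>z. frechet_derivative Y (at z) (X z) - frechet_derivative X (at z) (Y z))"

definition adapted_almost_tangent :: "('n::finite) cot set \<Rightarrow> 'n tens11 \<Rightarrow> bool" where
  "adapted_almost_tangent S J \<longleftrightarrow> smooth_tensor11 S J \<and>
     (\<forall>z\<in>S. J z \<circ> J z = (\<lambda>_. 0)
        \<and> range (J z) = vertical \<and> {u. J z u = 0} = vertical
        \<and> dim (range (J z)) = CARD('n))"

definition J_regular :: "('n::finite) cot set \<Rightarrow> 'n tens11 \<Rightarrow> 'n vf \<Rightarrow> bool" where
  "J_regular S J \<rho> \<longleftrightarrow> (\<forall>X. smooth_on S X \<longrightarrow>
     (\<forall>z\<in>S. J z (lie \<rho> (app11 J X) z) = - J z (X z)))"

definition lie_op :: "('n::finite) vf \<Rightarrow> ('n vf \<Rightarrow> 'n vf) \<Rightarrow> 'n vf \<Rightarrow> 'n vf" where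
  "lie_op \<rho> L X = (\<lambda>z. lie \<rho> (L X) z - L (lie \<rho> X) z)"

text \<open>Canonical nonlinear connection induced by rho: h + v = id, h - v = - L_rho J.\<close>
definition hproj :: "('n::finite) tens11 \<Rightarrow> 'n vf \<Rightarrow> 'n vf \<Rightarrow> 'n vf" where
  "hproj J \<rho> X = (\<lambda>z. (1/2) *\<^sub>R (X z - lie_op \<rho> (app11 J) X z))"

definition vproj :: "('n::finite) tens11 \<Rightarrow> 'n vf \<Rightarrow> 'n vf \<Rightarrow> 'n vf" where
  "vproj J \<rho> X = (\<lambda>z. (1/2) *\<^sub>R (X z + lie_op \<rho> (app11 J) X z))"

definition dyn_cov :: "('n::finite) tens11 \<Rightarrow> 'n vf \<Rightarrow> 'n vf \<Rightarrow> 'n vf" where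
  "dyn_cov J \<rho> X = (\<lambda>z. hproj J \<rho> (lie \<rho> (hproj J \<rho> X)) z + vproj J \<rho> (lie \<rho> (vproj J \<rho> X)) z)"

definition dyn_cov11 :: "('n::finite) tens11 \<Rightarrow> 'n vf \<Rightarrow> ('n vf \<Rightarrow> 'n vf) \<Rightarrow> 'n vf \<Rightarrow> 'n vf" where
  "dyn_cov11 J \<rho> T X = (\<lambda>z. dyn_cov J \<rho> (T X) z - T (dyn_cov J \<rho> X) z)"

definition Fop :: "('n::finite) tens11 \<Rightarrow> 'n vf \<Rightarrow> 'n vf \<Rightarrow> 'n vf" where
  "Fop J \<rho> X = (\<lambda>z. hproj J \<rho> (lie_op \<rho> (hproj J \<rho>) X) z - J z (X z))"

end

theory Submission
  imports Defs
begin

text \<open>Write \<open>L\<close> for the Lie derivative along \<open>\<rho>\<close> and \<open>K = L J - J L\<close> for the Lie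
  derivative of \<open>J\<close>, so that \<open>h = (id - K)/2\<close>, \<open>v = (id + K)/2\<close> and
  \<open>\<nabla> = h L h + v L v = (L + K L K)/2\<close>. Regularity says \<open>J L J = -J\<close>; together with
  \<open>J\<^sup>2 = 0\<close> this gives \<open>K J = J\<close> and \<open>J K = -J\<close>. Since \<open>K\<close> is tensorial and \<open>K x + x\<close> is
  vertical, hence of the form \<open>J c\<close> pointwise, \<open>K\<close> is an involution. These relations
  are all that is used: \<open>J\<^sup>2 = 0\<close> and \<open>J L J = -J\<close> alone make \<open>\<nabla>\<close> commute with \<open>J\<close>, and
  with \<open>K\<^sup>2 = id\<close> also with \<open>\<bbbF>\<close>.\<close>

section \<open>Smooth functions\<close>

lemma frechet_derivative_cong_open:
  assumes "open S" "z \<in> S" "\<And>y. y \<in> S \<Longrightarrow> f y = g y"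
  shows "frechet_derivative f (at z) = frechet_derivative g (at z)"
proof -
  have "(f has_derivative D) (at z) \<longleftrightarrow> (g has_derivative D) (at z)" for D
    using has_derivative_transform_within_open[OF _ assms(1,2)] assms(3) by metis
  then show ?thesis unfolding frechet_derivative_def by simp
qed

lemma iter_deriv_cong_open:
  assumes "open S" "\<And>y. y \<in> S \<Longrightarrow> f y = g y" "z \<in> S"
  shows "iter_deriv f ws z = iter_deriv g ws z"
  using assms(3)
proof (induction ws arbitrary: z)
  case Nil
  then show ?case using assms(2) by simp
next
  case (Cons w ws)
  then show ?case
    using frechet_derivative_cong_open[OF assms(1) Cons.prems, of "iter_deriv f ws"] by simp
qed

lemma differentiable_cong_open:
  assumes "open S" "z \<in> S" "\<And>y. y \<in> S \<Longrightarrow> f y = g y" "f differentiable (at z)"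
  shows "g differentiable (at z)"
  using assms has_derivative_transform_within_open unfolding differentiable_def by metis

lemma smooth_on_cong:
  assumes "open S" "smooth_on S f" "\<And>y. y \<in> S \<Longrightarrow> f y = g y"
  shows "smooth_on S g"
  unfolding smooth_on_def
proof (intro allI ballI)
  fix ws z assume "z \<in> S"
  moreover have "iter_deriv f ws y = iter_deriv g ws y" if "y \<in> S" for y
    by (rule iter_deriv_cong_open[OF assms(1)]) (use assms(3) that in auto)
  ultimately show "iter_deriv g ws differentiable (at z)"
    using assms(1,2) differentiable_cong_open unfolding smooth_on_def by metis
qed

lemma iter_deriv_append:
  "iter_deriv f (ws @ [w]) = iter_deriv (\<lambda>z. frechet_derivative f (at z) w) ws"
  by (induction ws) auto

lemma smooth_on_frechet_derivative:
  "smooth_on S f \<Longrightarrow> smooth_on S (\<lambda>z. frechet_derivative f (at z) w)"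
  unfolding smooth_on_def by (metis iter_deriv_append)

lemma smooth_on_has_derivative:
  "smooth_on S f \<Longrightarrow> z \<in> S \<Longrightarrow> (f has_derivative frechet_derivative f (at z)) (at z)"
  unfolding smooth_on_def by (metis iter_deriv.simps(1) frechet_derivative_works)

lemma smooth_on_coinduct:
  assumes "P f"
    and step: "\<And>f. P f \<Longrightarrow>
      (\<forall>z\<in>S. f differentiable (at z)) \<and> (\<forall>w. P (\<lambda>z. frechet_derivative f (at z) w))"
  shows "smooth_on S f"
proof -
  have "\<forall>f. P f \<longrightarrow> (\<forall>z\<in>S. iter_deriv f ws differentiable (at z))" for ws
    by (induction ws rule: rev_induct) (use step in \<open>simp_all add: iter_deriv_append\<close>)
  then show ?thesis using assms(1) unfolding smooth_on_def by blast
qed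

lemma smooth_on_const: "smooth_on S (\<lambda>_. c)"
proof (rule smooth_on_coinduct[where P = "\<lambda>f. \<exists>c. f = (\<lambda>_. c)"])
  fix f :: "'a \<Rightarrow> 'b" assume "\<exists>c. f = (\<lambda>_. c)"
  then show "(\<forall>z\<in>S. f differentiable (at z)) \<and> (\<forall>w. \<exists>c. (\<lambda>z. frechet_derivative f (at z) w) = (\<lambda>_. c))"
    by (auto simp: frechet_derivative_const)
qed auto

text \<open>By the Leibniz rule, derivatives of bilinear products of smooth functions are sums of
  such products; this class is therefore closed under differentiation.\<close>

inductive bilinear_sum for S :: "'a::real_normed_vector set"
    and pr :: "'b::real_normed_vector \<Rightarrow> 'c::real_normed_vector \<Rightarrow> 'd::real_normed_vector" where
  product: "smooth_on S f \<Longrightarrow> smooth_on S g \<Longrightarrow> bilinear_sum S pr (\<lambda>z. pr (f z) (g z))"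
| add: "bilinear_sum S pr a \<Longrightarrow> bilinear_sum S pr b \<Longrightarrow> bilinear_sum S pr (\<lambda>z. a z + b z)"
| cong: "bilinear_sum S pr a \<Longrightarrow> (\<And>z. z \<in> S \<Longrightarrow> a z = b z) \<Longrightarrow> bilinear_sum S pr b"

lemma bilinear_sum_derivative:
  assumes "open S" "bounded_bilinear pr" "bilinear_sum S pr h"
  shows "(\<forall>z\<in>S. h differentiable (at z)) \<and>
    (\<forall>w. bilinear_sum S pr (\<lambda>z. frechet_derivative h (at z) w))"
  using assms(3)
proof (induction rule: bilinear_sum.induct)
  case (product f g)
  let ?D = "\<lambda>z w. pr (f z) (frechet_derivative g (at z) w) + pr (frechet_derivative f (at z) w) (g z)"
  have d: "((\<lambda>z. pr (f z) (g z)) has_derivative ?D z) (at z)" if "z \<in> S" for z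
    using bounded_bilinear.FDERIV[OF assms(2) smooth_on_has_derivative smooth_on_has_derivative]
      product that by blast
  show ?case
  proof (intro conjI ballI allI)
    fix w
    have "bilinear_sum S pr (\<lambda>z. ?D z w)"
      using product by (intro bilinear_sum.add bilinear_sum.product smooth_on_frechet_derivative)
    moreover have "?D z w = frechet_derivative (\<lambda>z. pr (f z) (g z)) (at z) w" if "z \<in> S" for z
      using fun_cong[OF frechet_derivative_at[OF d[OF that]]] by simp
    ultimately show "bilinear_sum S pr (\<lambda>z. frechet_derivative (\<lambda>z. pr (f z) (g z)) (at z) w)"
      by (rule bilinear_sum.cong)
  qed (use d differentiableI in blast)
next
  case (add a b)
  let ?D = "\<lambda>z w. frechet_derivative a (at z) w + frechet_derivative b (at z) w"
  have d: "((\<lambda>z. a z + b z) has_derivative ?D z) (at z)" if "z \<in> S" for z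
    using add that by (intro has_derivative_add) (simp_all add: frechet_derivative_works[symmetric])
  show ?case
  proof (intro conjI ballI allI)
    fix w
    have "bilinear_sum S pr (\<lambda>z. ?D z w)"
      using add by (intro bilinear_sum.add) auto
    moreover have "?D z w = frechet_derivative (\<lambda>z. a z + b z) (at z) w" if "z \<in> S" for z
      using fun_cong[OF frechet_derivative_at[OF d[OF that]]] by simp
    ultimately show "bilinear_sum S pr (\<lambda>z. frechet_derivative (\<lambda>z. a z + b z) (at z) w)"
      by (rule bilinear_sum.cong)
  qed (use d differentiableI in blast)
next
  case (cong a b)
  show ?case
  proof (intro conjI ballI allI)
    fix z assume "z \<in> S"
    then show "b differentiable (at z)"
      using cong assms(1) differentiable_cong_open by metis
  next
    fix w
    have "frechet_derivative a (at z) w = frechet_derivative b (at z) w" if "z \<in> S" for z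
      using frechet_derivative_cong_open[OF assms(1) that, of a b] cong.hyps(2) by simp
    with cong.IH show "bilinear_sum S pr (\<lambda>z. frechet_derivative b (at z) w)"
      by (blast intro: bilinear_sum.cong[of S pr "\<lambda>z. frechet_derivative a (at z) w"])
  qed
qed

lemma smooth_on_bilinear_sum:
  "open S \<Longrightarrow> bounded_bilinear pr \<Longrightarrow> bilinear_sum S pr h \<Longrightarrow> smooth_on S h"
  by (rule smooth_on_coinduct[of "bilinear_sum S pr"]) (auto dest: bilinear_sum_derivative)

lemma smooth_on_bilinear:
  "open S \<Longrightarrow> bounded_bilinear pr \<Longrightarrow> smooth_on S f \<Longrightarrow> smooth_on S g \<Longrightarrow>
    smooth_on S (\<lambda>z. pr (f z) (g z))"
  by (rule smooth_on_bilinear_sum) (auto intro: bilinear_sum.product)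

lemma smooth_on_lincomb:
  assumes "open S" "smooth_on S f" "smooth_on S g"
  shows "smooth_on S (\<lambda>z. a *\<^sub>R f z + b *\<^sub>R g z)"
proof (rule smooth_on_bilinear_sum[OF assms(1) bounded_bilinear_scaleR], rule bilinear_sum.add)
  show "bilinear_sum S (*\<^sub>R) (\<lambda>z. a *\<^sub>R f z)" "bilinear_sum S (*\<^sub>R) (\<lambda>z. b *\<^sub>R g z)"
    using bilinear_sum.product[OF smooth_on_const[of S a] assms(2), of scaleR]
      bilinear_sum.product[OF smooth_on_const[of S b] assms(3), of scaleR] by simp_all
qed

lemma smooth_on_add: "open S \<Longrightarrow> smooth_on S f \<Longrightarrow> smooth_on S g \<Longrightarrow> smooth_on S (\<lambda>z. f z + g z)"
  using smooth_on_lincomb[where a=1 and b=1] by simp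

lemma smooth_on_diff: "open S \<Longrightarrow> smooth_on S f \<Longrightarrow> smooth_on S g \<Longrightarrow> smooth_on S (\<lambda>z. f z - g z)"
  using smooth_on_lincomb[where a=1 and b="-1"] by simp

lemma smooth_on_sum:
  assumes "open S" "finite A" "\<And>i. i \<in> A \<Longrightarrow> smooth_on S (F i)"
  shows "smooth_on S (\<lambda>z. \<Sum>i\<in>A. F i z)"
  using assms(2,3)
proof (induction A rule: finite_induct)
  case (insert i A)
  then show ?case by (simp add: smooth_on_add[OF assms(1)])
qed (simp add: smooth_on_const)

lemma linear_Basis_expansion:
  fixes f :: "'a::euclidean_space \<Rightarrow> 'b::real_vector"
  assumes "linear f"
  shows "f x = (\<Sum>b\<in>Basis. (x \<bullet> b) *\<^sub>R f b)"
proof -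
  have "f x = f (\<Sum>b\<in>Basis. (x \<bullet> b) *\<^sub>R b)" by (simp add: euclidean_representation)
  also have "\<dots> = (\<Sum>b\<in>Basis. (x \<bullet> b) *\<^sub>R f b)" using assms by (simp add: linear_sum linear_scale)
  finally show ?thesis .
qed

lemma smooth_on_coordinate_sum:
  fixes g :: "'a::real_normed_vector \<Rightarrow> 'b::euclidean_space"
  assumes "open S" "smooth_on S g" "\<And>b. b \<in> Basis \<Longrightarrow> smooth_on S (F b)"
  shows "smooth_on S (\<lambda>z. \<Sum>b\<in>Basis. (g z \<bullet> b) *\<^sub>R F b z)"
proof (rule smooth_on_sum[OF assms(1) finite_Basis])
  fix b :: 'b assume "b \<in> Basis"
  then show "smooth_on S (\<lambda>z. (g z \<bullet> b) *\<^sub>R F b z)"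
    using assms by (intro smooth_on_bilinear[OF _ bounded_bilinear_scaleR]
        smooth_on_bilinear[OF _ bounded_bilinear_inner, of S g "\<lambda>_. b"] smooth_on_const)
qed

lemma smooth_on_frechet_derivative_apply:
  fixes f :: "'a::euclidean_space \<Rightarrow> 'b::real_normed_vector"
  assumes "open S" "smooth_on S f" "smooth_on S g"
  shows "smooth_on S (\<lambda>z. frechet_derivative f (at z) (g z))"
proof (rule smooth_on_cong[OF assms(1) smooth_on_coordinate_sum[OF assms(1,3)]])
  show "smooth_on S (\<lambda>z. frechet_derivative f (at z) b)" for b
    using assms(2) by (rule smooth_on_frechet_derivative)
  show "(\<Sum>b\<in>Basis. (g z \<bullet> b) *\<^sub>R frechet_derivative f (at z) b) = frechet_derivative f (at z) (g z)"
    if "z \<in> S" for z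
    using linear_Basis_expansion has_derivative_linear smooth_on_has_derivative[OF assms(2) that]
    by metis
qed

lemma lie_local:
  assumes "open S" "z \<in> S" "\<And>y. y \<in> S \<Longrightarrow> X y = Y y"
  shows "lie \<rho> X z = lie \<rho> Y z"
  unfolding lie_def using frechet_derivative_cong_open[OF assms] assms(2,3) by simp

lemma smooth_on_lie:
  "open S \<Longrightarrow> smooth_on S \<rho> \<Longrightarrow> smooth_on S X \<Longrightarrow> smooth_on S (lie \<rho> X)"
  unfolding lie_def by (intro smooth_on_diff smooth_on_frechet_derivative_apply)

lemma lie_lincomb:
  assumes "smooth_on S \<rho>" "smooth_on S X" "smooth_on S Y" "z \<in> S"
  shows "lie \<rho> (\<lambda>y. a *\<^sub>R X y + b *\<^sub>R Y y) z = a *\<^sub>R lie \<rho> X z + b *\<^sub>R lie \<rho> Y z"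
proof -
  let ?DX = "frechet_derivative X (at z)" and ?DY = "frechet_derivative Y (at z)"
  have "((\<lambda>y. a *\<^sub>R X y + b *\<^sub>R Y y) has_derivative (\<lambda>w. a *\<^sub>R ?DX w + b *\<^sub>R ?DY w)) (at z)"
    using smooth_on_has_derivative[OF assms(2,4)] smooth_on_has_derivative[OF assms(3,4)]
    by (auto intro!: derivative_eq_intros)
  moreover have "linear (frechet_derivative \<rho> (at z))"
    using smooth_on_has_derivative[OF assms(1,4)] has_derivative_linear by blast
  ultimately show ?thesis
    unfolding lie_def by (simp add: frechet_derivative_at[symmetric] linear_add linear_scale algebra_simps)
qed

section \<open>Operator identities\<close>

type_synonym ('a, 'b) field_op = "('a \<Rightarrow> 'b) \<Rightarrow> 'a \<Rightarrow> 'b"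

definition op_commutator :: "('a, 'b::real_vector) field_op \<Rightarrow> ('a, 'b) field_op \<Rightarrow> ('a, 'b) field_op" where
  "op_commutator L J x = (\<lambda>z. L (J x) z - J (L x) z)"

definition hor_op :: "('a, 'b::real_vector) field_op \<Rightarrow> ('a, 'b) field_op \<Rightarrow> ('a, 'b) field_op" where
  "hor_op L J x = (\<lambda>z. (1/2) *\<^sub>R (x z - op_commutator L J x z))"

definition ver_op :: "('a, 'b::real_vector) field_op \<Rightarrow> ('a, 'b) field_op \<Rightarrow> ('a, 'b) field_op" where
  "ver_op L J x = (\<lambda>z. (1/2) *\<^sub>R (x z + op_commutator L J x z))"

definition dyn_op :: "('a, 'b::real_vector) field_op \<Rightarrow> ('a, 'b) field_op \<Rightarrow> ('a, 'b) field_op" where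
  "dyn_op L J x = (\<lambda>z. hor_op L J (L (hor_op L J x)) z + ver_op L J (L (ver_op L J x)) z)"

definition F_op :: "('a, 'b::real_vector) field_op \<Rightarrow> ('a, 'b) field_op \<Rightarrow> ('a, 'b) field_op" where
  "F_op L J x = (\<lambda>z. hor_op L J (\<lambda>z. L (hor_op L J x) z - hor_op L J (L x) z) z - J x z)"

lemma hproj_eq_hor_op: "hproj J \<rho> = hor_op (lie \<rho>) (app11 J)"
  by (simp add: fun_eq_iff hproj_def hor_op_def lie_op_def op_commutator_def)

lemma vproj_eq_ver_op: "vproj J \<rho> = ver_op (lie \<rho>) (app11 J)"
  by (simp add: fun_eq_iff vproj_def ver_op_def lie_op_def op_commutator_def)

lemma dyn_cov_eq_dyn_op: "dyn_cov J \<rho> = dyn_op (lie \<rho>) (app11 J)"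
  by (simp add: fun_eq_iff dyn_cov_def dyn_op_def hproj_eq_hor_op vproj_eq_ver_op)

lemma Fop_eq_F_op: "Fop J \<rho> = F_op (lie \<rho>) (app11 J)"
  by (simp add: fun_eq_iff Fop_def F_op_def hproj_eq_hor_op lie_op_def app11_def)

definition represents_on :: "'a set \<Rightarrow> (('a \<Rightarrow> 'b) \<Rightarrow> 'a \<Rightarrow> 'c) \<Rightarrow> (('a \<Rightarrow> 'b) \<Rightarrow> 'a \<Rightarrow> 'c) \<Rightarrow> bool"
  where
  "represents_on S L L' \<longleftrightarrow> (\<forall>X x. (\<forall>z\<in>S. X z = x z) \<longrightarrow> (\<forall>z\<in>S. L X z = L' x z))"

lemma represents_onD:
  "represents_on S L L' \<Longrightarrow> (\<And>z. z \<in> S \<Longrightarrow> X z = x z) \<Longrightarrow> z \<in> S \<Longrightarrow> L X z = L' x z"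
  unfolding represents_on_def by blast

lemma represents_on_id: "represents_on S (\<lambda>X. X) (\<lambda>x. x)"
  unfolding represents_on_def by blast

lemma represents_on_compose:
  "represents_on S L L' \<Longrightarrow> represents_on S M M' \<Longrightarrow>
    represents_on S (\<lambda>X. L (M X)) (\<lambda>x. L' (M' x))"
  unfolding represents_on_def by blast

lemma represents_on_add:
  "represents_on S A A' \<Longrightarrow> represents_on S B B' \<Longrightarrow>
    represents_on S (\<lambda>X z. A X z + B X z) (\<lambda>x z. A' x z + B' x z)"
  unfolding represents_on_def by metis

lemma represents_on_diff:
  "represents_on S A A' \<Longrightarrow> represents_on S B B' \<Longrightarrow>
    represents_on S (\<lambda>X z. A X z - B X z) (\<lambda>x z. A' x z - B' x z)"
  unfolding represents_on_def by metis

lemma represents_on_scaleR: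
  "represents_on S A A' \<Longrightarrow> represents_on S (\<lambda>X z. c *\<^sub>R A X z) (\<lambda>x z. c *\<^sub>R A' x z)"
  unfolding represents_on_def by metis

lemma represents_on_op_commutator:
  assumes "represents_on S L L'" "represents_on S J J'"
  shows "represents_on S (op_commutator L J) (op_commutator L' J')"
  unfolding op_commutator_def
  using represents_on_diff[OF represents_on_compose[OF assms] represents_on_compose[OF assms(2,1)]] .

lemma represents_on_hor_op:
  assumes "represents_on S L L'" "represents_on S J J'"
  shows "represents_on S (hor_op L J) (hor_op L' J')"
  unfolding hor_op_def
  using represents_on_scaleR[OF represents_on_diff[OF represents_on_id represents_on_op_commutator[OF assms]]] .

lemma represents_on_ver_op:
  assumes "represents_on S L L'" "represents_on S J J'"
  shows "represents_on S (ver_op L J) (ver_op L' J')"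
  unfolding ver_op_def
  using represents_on_scaleR[OF represents_on_add[OF represents_on_id represents_on_op_commutator[OF assms]]] .

lemma represents_on_dyn_op:
  assumes "represents_on S L L'" "represents_on S J J'"
  shows "represents_on S (dyn_op L J) (dyn_op L' J')"
proof -
  have hLh: "represents_on S (\<lambda>X. hor_op L J (L (hor_op L J X))) (\<lambda>x. hor_op L' J' (L' (hor_op L' J' x)))"
    by (intro represents_on_compose[OF represents_on_hor_op[OF assms]]
        represents_on_compose[OF assms(1) represents_on_hor_op[OF assms]])
  have vLv: "represents_on S (\<lambda>X. ver_op L J (L (ver_op L J X))) (\<lambda>x. ver_op L' J' (L' (ver_op L' J' x)))"
    by (intro represents_on_compose[OF represents_on_ver_op[OF assms]]
        represents_on_compose[OF assms(1) represents_on_ver_op[OF assms]])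
  show ?thesis
    unfolding dyn_op_def using represents_on_add[OF hLh vLv] .
qed

lemma represents_on_F_op:
  assumes "represents_on S L L'" "represents_on S J J'"
  shows "represents_on S (F_op L J) (F_op L' J')"
proof -
  have "represents_on S (\<lambda>X z. L (hor_op L J X) z - hor_op L J (L X) z)
      (\<lambda>x z. L' (hor_op L' J' x) z - hor_op L' J' (L' x) z)"
    by (intro represents_on_diff represents_on_compose[OF assms(1) represents_on_hor_op[OF assms]]
        represents_on_compose[OF represents_on_hor_op[OF assms] assms(1)])
  from represents_on_diff[OF represents_on_compose[OF represents_on_hor_op[OF assms] this] assms(2)]
  show ?thesis unfolding F_op_def .
qed

locale regular_operators =
  fixes V :: "('a \<Rightarrow> 'b::real_vector) set" and L J :: "('a, 'b) field_op"
  assumes zero_in_V [simp]: "(\<lambda>z. 0) \<in> V"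
    and V_lincomb: "x \<in> V \<Longrightarrow> y \<in> V \<Longrightarrow> (\<lambda>z. a *\<^sub>R x z + b *\<^sub>R y z) \<in> V"
    and L_in_V [simp]: "x \<in> V \<Longrightarrow> L x \<in> V"
    and J_in_V [simp]: "x \<in> V \<Longrightarrow> J x \<in> V"
    and L_lincomb: "x \<in> V \<Longrightarrow> y \<in> V \<Longrightarrow>
      L (\<lambda>z. a *\<^sub>R x z + b *\<^sub>R y z) = (\<lambda>z. a *\<^sub>R L x z + b *\<^sub>R L y z)"
    and J_lincomb: "x \<in> V \<Longrightarrow> y \<in> V \<Longrightarrow>
      J (\<lambda>z. a *\<^sub>R x z + b *\<^sub>R y z) = (\<lambda>z. a *\<^sub>R J x z + b *\<^sub>R J y z)"
    and J_J [simp]: "x \<in> V \<Longrightarrow> J (J x) = (\<lambda>z. 0)"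
    and J_L_J [simp]: "x \<in> V \<Longrightarrow> J (L (J x)) = (\<lambda>z. - J x z)"
begin

lemma V_closed [simp]:
  assumes "x \<in> V" "y \<in> V"
  shows "(\<lambda>z. x z + y z) \<in> V" "(\<lambda>z. x z - y z) \<in> V" "(\<lambda>z. c *\<^sub>R x z) \<in> V" "(\<lambda>z. - x z) \<in> V"
  using V_lincomb[OF assms, of 1 1] V_lincomb[OF assms, of 1 "-1"] V_lincomb[OF assms, of c 0]
    V_lincomb[OF assms, of "-1" 0] by simp_all

lemma L_linear [simp]:
  assumes "x \<in> V" "y \<in> V"
  shows "L (\<lambda>z. x z + y z) = (\<lambda>z. L x z + L y z)" "L (\<lambda>z. x z - y z) = (\<lambda>z. L x z - L y z)"
    "L (\<lambda>z. c *\<^sub>R x z) = (\<lambda>z. c *\<^sub>R L x z)" "L (\<lambda>z. - x z) = (\<lambda>z. - L x z)"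
  using L_lincomb[OF assms, of 1 1] L_lincomb[OF assms, of 1 "-1"] L_lincomb[OF assms, of c 0]
    L_lincomb[OF assms, of "-1" 0] by simp_all

lemma J_linear [simp]:
  assumes "x \<in> V" "y \<in> V"
  shows "J (\<lambda>z. x z + y z) = (\<lambda>z. J x z + J y z)" "J (\<lambda>z. x z - y z) = (\<lambda>z. J x z - J y z)"
    "J (\<lambda>z. c *\<^sub>R x z) = (\<lambda>z. c *\<^sub>R J x z)" "J (\<lambda>z. - x z) = (\<lambda>z. - J x z)"
  using J_lincomb[OF assms, of 1 1] J_lincomb[OF assms, of 1 "-1"] J_lincomb[OF assms, of c 0]
    J_lincomb[OF assms, of "-1" 0] by simp_all

lemma L_zero [simp]: "L (\<lambda>z. 0) = (\<lambda>z. 0)"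
  using L_lincomb[OF zero_in_V zero_in_V, of 0 0] by simp

lemma J_zero [simp]: "J (\<lambda>z. 0) = (\<lambda>z. 0)"
  using J_lincomb[OF zero_in_V zero_in_V, of 0 0] by simp

lemma op_commutator_in_V [simp]: "x \<in> V \<Longrightarrow> op_commutator L J x \<in> V"
  unfolding op_commutator_def by simp

lemma op_commutator_J [simp]: "x \<in> V \<Longrightarrow> op_commutator L J (J x) = J x"
  unfolding op_commutator_def by simp

lemma J_op_commutator [simp]: "x \<in> V \<Longrightarrow> J (op_commutator L J x) = (\<lambda>z. - J x z)"
  unfolding op_commutator_def by simp

lemma op_commutator_add:
  "x \<in> V \<Longrightarrow> y \<in> V \<Longrightarrow> op_commutator L J (\<lambda>z. x z + y z) = (\<lambda>z. op_commutator L J x z + op_commutator L J y z)"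
  unfolding op_commutator_def by (simp add: algebra_simps)

lemma dyn_op_J_commute: "x \<in> V \<Longrightarrow> dyn_op L J (J x) = J (dyn_op L J x)"
  unfolding dyn_op_def hor_op_def ver_op_def op_commutator_def
  by (simp add: algebra_simps fun_eq_iff)

end

locale involutive_regular_operators = regular_operators +
  assumes op_commutator_involutive: "x \<in> V \<Longrightarrow> op_commutator L J (op_commutator L J x) = x"
begin

text \<open>\<open>K\<^sup>2 = id\<close>, solved for its only term of degree four so that it can serve as a rewrite rule.\<close>

lemma J_L_L_J [simp]:
  assumes "x \<in> V"
  shows "J (L (L (J x))) = (\<lambda>z. - x z - L (J x) z - J (L x) z)"
  using op_commutator_involutive[OF assms] assms
  by (simp add: op_commutator_def fun_eq_iff algebra_simps eq_neg_iff_add_eq_0 neg_eq_iff_add_eq_0)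

lemma dyn_op_F_op_commute: "x \<in> V \<Longrightarrow> dyn_op L J (F_op L J x) = F_op L J (dyn_op L J x)"
  unfolding dyn_op_def F_op_def hor_op_def ver_op_def op_commutator_def
  by (simp add: algebra_simps fun_eq_iff)

end

section \<open>The local model\<close>

text \<open>Vector fields are only meaningful on the chart \<open>S\<close>. Representing each field by the one
  that vanishes outside \<open>S\<close> turns the pointwise relations on \<open>S\<close> into identities between
  operators on functions, to which \<^locale>\<open>involutive_regular_operators\<close> applies;
  \<^const>\<open>represents_on\<close> transports the result back.\<close>

definition zero_outside :: "'a set \<Rightarrow> ('a \<Rightarrow> 'b::zero) \<Rightarrow> 'a \<Rightarrow> 'b" where
  "zero_outside S X = (\<lambda>z. if z \<in> S then X z else 0)"

locale regular_vector_field =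
  fixes S :: "'n::finite cot set" and J :: "'n tens11" and \<rho> :: "'n vf"
  assumes open_S: "open S"
    and adapted: "adapted_almost_tangent S J"
    and smooth_rho: "smooth_on S \<rho>"
    and regular: "J_regular S J \<rho>"
begin

lemma linear_J: "z \<in> S \<Longrightarrow> linear (J z)"
  using adapted unfolding adapted_almost_tangent_def smooth_tensor11_def by blast

lemma smooth_on_J: "smooth_on S (\<lambda>z. J z u)"
  using adapted unfolding adapted_almost_tangent_def smooth_tensor11_def by blast

lemma J_J_at: "z \<in> S \<Longrightarrow> J z (J z u) = 0"
  using adapted unfolding adapted_almost_tangent_def by (metis comp_apply)

lemma J_kernel_subset_image:
  assumes "z \<in> S" "J z u = 0"
  shows "\<exists>w. J z w = u"
proof -
  have "u \<in> {u. J z u = 0}" using assms(2) by simp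
  then have "u \<in> range (J z)" using adapted assms(1) unfolding adapted_almost_tangent_def by blast
  then show ?thesis by auto
qed

lemma smooth_on_app11:
  assumes "smooth_on S X"
  shows "smooth_on S (app11 J X)"
proof (rule smooth_on_cong[OF open_S smooth_on_coordinate_sum[OF open_S assms, of "\<lambda>b z. J z b"]])
  show "smooth_on S (\<lambda>z. J z b)" for b by (rule smooth_on_J)
  show "(\<Sum>b\<in>Basis. (X z \<bullet> b) *\<^sub>R J z b) = app11 J X z" if "z \<in> S" for z
    by (simp add: app11_def linear_Basis_expansion[OF linear_J[OF that], symmetric])
qed

lemma frechet_derivative_app11:
  assumes X: "smooth_on S X" and z: "z \<in> S"
  shows "frechet_derivative (app11 J X) (at z) w =
    J z (frechet_derivative X (at z) w) + (\<Sum>b\<in>Basis. (X z \<bullet> b) *\<^sub>R frechet_derivative (\<lambda>y. J y b) (at z) w)"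
proof -
  let ?DX = "frechet_derivative X (at z)" and ?DJ = "\<lambda>b. frechet_derivative (\<lambda>y. J y b) (at z)"
  have "((\<lambda>y. \<Sum>b\<in>Basis. (X y \<bullet> b) *\<^sub>R J y b) has_derivative
     (\<lambda>w. \<Sum>b\<in>Basis. (X z \<bullet> b) *\<^sub>R ?DJ b w + (?DX w \<bullet> b) *\<^sub>R J z b)) (at z)"
    using smooth_on_has_derivative[OF X z] smooth_on_has_derivative[OF smooth_on_J z]
    by (auto intro!: derivative_eq_intros)
  moreover have "frechet_derivative (app11 J X) (at z) =
      frechet_derivative (\<lambda>y. \<Sum>b\<in>Basis. (X y \<bullet> b) *\<^sub>R J y b) (at z)"
    by (rule frechet_derivative_cong_open[OF open_S z])
      (simp add: app11_def linear_Basis_expansion[OF linear_J])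
  ultimately show ?thesis
    by (simp add: frechet_derivative_at[symmetric] sum.distrib linear_Basis_expansion[OF linear_J[OF z], of "?DX w"])
qed

definition fields :: "'n vf set" where
  "fields = {x. smooth_on S x \<and> (\<forall>z. z \<notin> S \<longrightarrow> x z = 0)}"

definition Lr :: "'n vf \<Rightarrow> 'n vf" where
  "Lr x = zero_outside S (lie \<rho> x)"

definition Jr :: "'n vf \<Rightarrow> 'n vf" where
  "Jr x = zero_outside S (app11 J x)"

lemma zero_outside_in_fields: "smooth_on S X \<Longrightarrow> zero_outside S X \<in> fields"
  unfolding fields_def by (auto simp: zero_outside_def intro: smooth_on_cong[OF open_S, of X])

lemma fieldsD: "x \<in> fields \<Longrightarrow> smooth_on S x" "x \<in> fields \<Longrightarrow> z \<notin> S \<Longrightarrow> x z = 0"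
  unfolding fields_def by blast+

lemma represents_on_Lr: "represents_on S (lie \<rho>) Lr"
  unfolding represents_on_def Lr_def zero_outside_def using lie_local[OF open_S] by metis

lemma represents_on_Jr: "represents_on S (app11 J) Jr"
  unfolding represents_on_def Jr_def zero_outside_def app11_def by simp

sublocale regular_operators fields Lr Jr
proof
  show "(\<lambda>z. 0) \<in> fields"
    unfolding fields_def by (simp add: smooth_on_const)
next
  fix x y a b assume x: "x \<in> fields" and y: "y \<in> fields"
  show "(\<lambda>z. a *\<^sub>R x z + b *\<^sub>R y z) \<in> fields"
    using x y smooth_on_lincomb[OF open_S fieldsD(1)[OF x] fieldsD(1)[OF y]] unfolding fields_def by simp
  show "Lr x \<in> fields"
    unfolding Lr_def by (rule zero_outside_in_fields, rule smooth_on_lie[OF open_S smooth_rho fieldsD(1)[OF x]])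
  show "Jr x \<in> fields"
    unfolding Jr_def by (rule zero_outside_in_fields, rule smooth_on_app11[OF fieldsD(1)[OF x]])
  show "Lr (\<lambda>z. a *\<^sub>R x z + b *\<^sub>R y z) = (\<lambda>z. a *\<^sub>R Lr x z + b *\<^sub>R Lr y z)"
    unfolding Lr_def zero_outside_def
    using lie_lincomb[OF smooth_rho fieldsD(1)[OF x] fieldsD(1)[OF y]] by (simp add: fun_eq_iff)
  show "Jr (\<lambda>z. a *\<^sub>R x z + b *\<^sub>R y z) = (\<lambda>z. a *\<^sub>R Jr x z + b *\<^sub>R Jr y z)"
    unfolding Jr_def zero_outside_def app11_def using linear_J by (simp add: fun_eq_iff linear_add linear_scale)
  show "Jr (Jr x) = (\<lambda>z. 0)"
    unfolding Jr_def zero_outside_def app11_def by (simp add: J_J_at fun_eq_iff)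
  show "Jr (Lr (Jr x)) = (\<lambda>z. - Jr x z)"
  proof
    fix z show "Jr (Lr (Jr x)) z = - Jr x z"
    proof (cases "z \<in> S")
      case True
      have "lie \<rho> (Jr x) z = lie \<rho> (app11 J x) z"
        by (rule lie_local[OF open_S True]) (simp add: Jr_def zero_outside_def)
      moreover have "J z (lie \<rho> (app11 J x) z) = - J z (x z)"
        using regular True fieldsD(1)[OF x] unfolding J_regular_def app11_def by simp
      ultimately show ?thesis
        using True by (simp add: Jr_def Lr_def zero_outside_def app11_def)
    qed (simp add: Jr_def zero_outside_def)
  qed
qed

text \<open>\<open>lie_J_at z\<close> is the coordinate expression \<open>u \<mapsto> (D\<^sub>\<rho> J) u - D\<rho> (J u) + J (D\<rho> u)\<close> of the
  tensor \<open>\<L>\<^sub>\<rho> J\<close> at \<open>z\<close>.\<close>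

definition lie_J_at :: "'n cot \<Rightarrow> 'n cot \<Rightarrow> 'n cot" where
  "lie_J_at z u = (\<Sum>b\<in>Basis. (u \<bullet> b) *\<^sub>R frechet_derivative (\<lambda>y. J y b) (at z) (\<rho> z))
     - frechet_derivative \<rho> (at z) (J z u) + J z (frechet_derivative \<rho> (at z) u)"

lemma op_commutator_at:
  assumes x: "x \<in> fields" and z: "z \<in> S"
  shows "op_commutator Lr Jr x z = lie_J_at z (x z)"
proof -
  let ?Dx = "frechet_derivative x (at z)" and ?Drho = "frechet_derivative \<rho> (at z)"
  have "lie \<rho> (Jr x) z = lie \<rho> (app11 J x) z"
    by (rule lie_local[OF open_S z]) (simp add: Jr_def zero_outside_def)
  then have "Lr (Jr x) z = lie \<rho> (app11 J x) z"
    using z by (simp add: Lr_def zero_outside_def)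
  also have "\<dots> = J z (?Dx (\<rho> z))
      + (\<Sum>b\<in>Basis. (x z \<bullet> b) *\<^sub>R frechet_derivative (\<lambda>y. J y b) (at z) (\<rho> z))
      - ?Drho (J z (x z))"
    unfolding lie_def frechet_derivative_app11[OF fieldsD(1)[OF x] z] by (simp add: app11_def)
  finally have "Lr (Jr x) z = \<dots>" .
  moreover have "Jr (Lr x) z = J z (?Dx (\<rho> z)) - J z (?Drho (x z))"
    using z linear_J[OF z] by (simp add: Jr_def Lr_def zero_outside_def app11_def lie_def linear_diff)
  ultimately show ?thesis
    unfolding op_commutator_def lie_J_at_def by (simp add: algebra_simps)
qed

lemma op_commutator_involutive:
  assumes x: "x \<in> fields"
  shows "op_commutator Lr Jr (op_commutator Lr Jr x) = x"
proof
  fix z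
  let ?K = "op_commutator Lr Jr"
  show "?K (?K x) z = x z"
  proof (cases "z \<in> S")
    case False
    then show ?thesis
      using fieldsD(2)[OF op_commutator_in_V[OF op_commutator_in_V[OF x]] False] fieldsD(2)[OF x False]
      by simp
  next
    case True
    define y where "y = (\<lambda>z. ?K x z + x z)"
    have y: "y \<in> fields" unfolding y_def using x by simp
    have "J z (y z) = 0"
      using fun_cong[OF J_op_commutator[OF x], of z] True x
      unfolding y_def by (simp add: Jr_def zero_outside_def app11_def linear_add[OF linear_J])
    then obtain u where u: "J z u = y z" using J_kernel_subset_image True by blast
    define c where "c = zero_outside S (\<lambda>_. u)"
    have c: "c \<in> fields" unfolding c_def by (rule zero_outside_in_fields[OF smooth_on_const])
    have Jc: "Jr c z = y z" using True u by (simp add: Jr_def c_def zero_outside_def app11_def)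
    \<comment> \<open>Tensoriality lets us replace \<open>y\<close> by \<open>J c\<close> at \<open>z\<close>, on which \<open>K\<close> acts trivially.\<close>
    have "?K y z = lie_J_at z (y z)" by (rule op_commutator_at[OF y True])
    also have "\<dots> = ?K (Jr c) z" using op_commutator_at[OF J_in_V[OF c] True] Jc by simp
    also have "\<dots> = y z" using c Jc by simp
    finally have "?K y z = y z" .
    moreover have "?K y z = ?K (?K x) z + ?K x z"
      unfolding y_def using op_commutator_add[OF op_commutator_in_V[OF x] x] by simp
    ultimately show ?thesis unfolding y_def by simp
  qed
qed

sublocale involutive_regular_operators fields Lr Jr
  by unfold_locales (rule op_commutator_involutive)

lemma dyn_cov11_vanishes:
  assumes T: "represents_on S T T'"
    and commute: "\<And>x. x \<in> fields \<Longrightarrow> dyn_op Lr Jr (T' x) = T' (dyn_op Lr Jr x)"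
    and X: "smooth_on S X" and z: "z \<in> S"
  shows "dyn_cov11 J \<rho> T X z = 0"
proof -
  let ?x = "zero_outside S X"
  have agree: "X y = ?x y" if "y \<in> S" for y
    using that by (simp add: zero_outside_def)
  have dyn: "represents_on S (dyn_cov J \<rho>) (dyn_op Lr Jr)"
    unfolding dyn_cov_eq_dyn_op by (rule represents_on_dyn_op[OF represents_on_Lr represents_on_Jr])
  have "dyn_cov J \<rho> (T X) z = dyn_op Lr Jr (T' ?x) z"
    using represents_onD[OF represents_on_compose[OF dyn T] agree z] .
  also have "\<dots> = T' (dyn_op Lr Jr ?x) z"
    using commute[OF zero_outside_in_fields[OF X]] by simp
  also have "\<dots> = T (dyn_cov J \<rho> X) z"
    using represents_onD[OF represents_on_compose[OF T dyn] agree z] by simp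
  finally show ?thesis unfolding dyn_cov11_def by simp
qed

end

theorem mainTheorem5:
  fixes S :: "'n::finite cot set" and J :: "'n tens11" and \<rho> :: "'n vf"
  assumes "open S"
    and "S \<subseteq> {z. snd z \<noteq> 0}"
    and "adapted_almost_tangent S J"
    and "smooth_on S \<rho>"
    and "J_regular S J \<rho>"
  shows "(\<forall>X. smooth_on S X \<longrightarrow> (\<forall>z\<in>S. dyn_cov11 J \<rho> (app11 J) X z = 0))
       \<and> (\<forall>X. smooth_on S X \<longrightarrow> (\<forall>z\<in>S. dyn_cov11 J \<rho> (Fop J \<rho>) X z = 0))"
proof -
  interpret regular_vector_field S J \<rho>
    using assms(1,3-5) by unfold_locales
  have F: "represents_on S (Fop J \<rho>) (F_op Lr Jr)"
    unfolding Fop_eq_F_op by (rule represents_on_F_op[OF represents_on_Lr represents_on_Jr])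
  show ?thesis
    using dyn_cov11_vanishes[OF represents_on_Jr dyn_op_J_commute]
      dyn_cov11_vanishes[OF F dyn_op_F_op_commute] by blast
qed

end
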